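(* Let $M$ be a monoidal category, $C$ an $M$-actegory and $x\in C$. Then in the bicategory $\mathit{Tamb}$ there are 2-cells $\varepsilon_x:R_x\otimes L_x\Rightarrow C(-,=)$ (in $\mathit{Tamb}_{C,C}$), given by composition $\int^{n}C(c,n\odot x)\times C(n\odot x,c')\to C(c,c')$, and $\eta_x:M(-,=)\Rightarrow L_x\otimes R_x$ (in $\mathit{Tamb}_{M,M}$), given by $M(k,k')\ni h\mapsto h\odot x\in C(k\odot x,k'\odot x)\cong\int^{c\in C}C(k\odot x,c)\times C(c,k'\odot x)$, which are morphisms of Tambara modules and satisfy the triangle identities: the composites $R_x\cong R_x\otimes M(-,=)\xrightarrow{R_x\otimes\eta_x}R_x\otimes L_x\otimes R_x\xrightarrow{\varepsilon_x\otimes R_x}C(-,=)\otimes R_x\cong R_x$ and $L_x\cong M(-,=)\otimes L_x\xrightarrow{\eta_x\otimes L_x}L_x\otimes R_x\otimes L_x\xrightarrow{L_x\otimes\varepsilon_x}L_x\otimes C(-,=)\cong L_x$ are identities (bicategorical associators and unitors being inserted as needed). Thus $R_x$ and $L_x$ are adjoint in $\mathit{Tamb}$. Moreover these structure maps are dinatural in $x$: for every $f:x\to y$ in $C$, $(R_f\otimes L_y);\varepsilon_y=(R_x\otimes L_f);\varepsilon_x$ as 2-cells $R_x\otimes L_y\Rightarrow C(-,=)$, and $\eta_x;(L_x\otimes R_f)=\eta_y;(L_f\otimes R_y)$ as 2-cells $M(-,=)\Rightarrow L_x\otimes R_y$.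
   Context: $(M,\otimes,I,\lambda,a)$ is a monoidal category. An $M$-actegory is a category $C$ with a functor $\odot:M\times C\to C$ and coherent natural isomorphisms $\lambda_x:I\odot x\to x$, $a_{m,n,x}:(m\otimes n)\odot x\to m\odot(n\odot x)$; $M$ is an $M$-actegory via $\otimes$. Composition is diagrammatic: $f;g$ means $f$ then $g$. A Tambara module $P\in\mathit{Tamb}_{C,D}$ ($C,D$ $M$-actegories) is a functor $P:C^{op}\times D\to\mathrm{Set}$ with strength maps $P(c,d)\to P(m\odot c,m\odot d)$ natural in $c,d$, (di)natural in $m$, compatible with unitors/associators; morphisms (2-cells) are strength-preserving natural transformations. $\mathit{Tamb}$ is the bicategory of $M$-actegories, with hom-categories $\mathit{Tamb}_{C,D}$, identity 1-cells the hom-profunctors $C(-,=)$, and composition $(P\otimes Q)(c,e)=\int^{d}P(c,d)\times Q(d,e)$ for $P\in\mathit{Tamb}_{C,D},Q\in\mathit{Tamb}_{D,E}$. For $x\in C$, $R_x\in\mathit{Tamb}_{C,M}$ is $(c,n)\mapsto C(c,n\odot x)$ with strength $h\mapsto(m\odot h);a^{-1}_{m,n,x}$, and $L_x\in\mathit{Tamb}_{M,C}$ is $(n,c)\mapsto C(n\odot x,c)$ with strength $h\mapsto a_{m,n,x};(m\odot h)$. For $f:x\to y$ in $C$, $R_f:R_x\Rightarrow R_y$ postcomposes with $n\odot f$ and $L_f:L_y\Rightarrow L_x$ precomposes with $n\odot f$. *)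

theory Defs
  imports Main
begin

record ('o,'a) cat =
  Ob :: "'o set"
  Hom :: "'o \<Rightarrow> 'o \<Rightarrow> 'a set"
  cmp :: "'a \<Rightarrow> 'a \<Rightarrow> 'a"   (* cmp f g = f;g  (first f, then g) *)
  idm :: "'o \<Rightarrow> 'a"

definition category :: "('o,'a,'z) cat_scheme \<Rightarrow> bool" where
  "category C \<longleftrightarrow>
     (\<forall>a b. Hom C a b \<noteq> {} \<longrightarrow> a \<in> Ob C \<and> b \<in> Ob C) \<and>
     (\<forall>a\<in>Ob C. idm C a \<in> Hom C a a) \<and>
     (\<forall>a b c f g. f \<in> Hom C a b \<and> g \<in> Hom C b c \<longrightarrow> cmp C f g \<in> Hom C a c) \<and>
     (\<forall>a b f. f \<in> Hom C a b \<longrightarrow> cmp C (idm C a) f = f \<and> cmp C f (idm C b) = f) \<and>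
     (\<forall>a b c d f g h. f \<in> Hom C a b \<and> g \<in> Hom C b c \<and> h \<in> Hom C c d \<longrightarrow>
        cmp C (cmp C f g) h = cmp C f (cmp C g h))"

definition iso_pair :: "('o,'a,'z) cat_scheme \<Rightarrow> 'o \<Rightarrow> 'o \<Rightarrow> 'a \<Rightarrow> 'a \<Rightarrow> bool" where
  "iso_pair C a b f g \<longleftrightarrow> f \<in> Hom C a b \<and> g \<in> Hom C b a \<and>
     cmp C f g = idm C a \<and> cmp C g f = idm C b"

definition bifunctor ::
  "('o1,'a1,'z1) cat_scheme \<Rightarrow> ('o2,'a2,'z2) cat_scheme \<Rightarrow> ('o3,'a3,'z3) cat_scheme \<Rightarrow>
   ('o1 \<Rightarrow> 'o2 \<Rightarrow> 'o3) \<Rightarrow> ('a1 \<Rightarrow> 'a2 \<Rightarrow> 'a3) \<Rightarrow> bool" where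
  "bifunctor A B D Fo Fa \<longleftrightarrow>
     (\<forall>a\<in>Ob A. \<forall>b\<in>Ob B. Fo a b \<in> Ob D) \<and>
     (\<forall>a a' b b' u f. a \<in> Ob A \<and> a' \<in> Ob A \<and> b \<in> Ob B \<and> b' \<in> Ob B \<and>
        u \<in> Hom A a a' \<and> f \<in> Hom B b b' \<longrightarrow> Fa u f \<in> Hom D (Fo a b) (Fo a' b')) \<and>
     (\<forall>a\<in>Ob A. \<forall>b\<in>Ob B. Fa (idm A a) (idm B b) = idm D (Fo a b)) \<and>
     (\<forall>a a' a'' b b' b'' u u' f f'. a \<in> Ob A \<and> a' \<in> Ob A \<and> a'' \<in> Ob A \<and>
        b \<in> Ob B \<and> b' \<in> Ob B \<and> b'' \<in> Ob B \<and>
        u \<in> Hom A a a' \<and> u' \<in> Hom A a' a'' \<and> f \<in> Hom B b b' \<and> f' \<in> Hom B b' b'' \<longrightarrow>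
        Fa (cmp A u u') (cmp B f f') = cmp D (Fa u f) (Fa u' f'))"

record ('o,'a) moncat = "('o,'a) cat" +
  tens_o :: "'o \<Rightarrow> 'o \<Rightarrow> 'o"
  tens_a :: "'a \<Rightarrow> 'a \<Rightarrow> 'a"
  unit_o :: "'o"
  lam :: "'o \<Rightarrow> 'a"
  lam_inv :: "'o \<Rightarrow> 'a"
  rho :: "'o \<Rightarrow> 'a"
  rho_inv :: "'o \<Rightarrow> 'a"
  mas :: "'o \<Rightarrow> 'o \<Rightarrow> 'o \<Rightarrow> 'a"
  mas_inv :: "'o \<Rightarrow> 'o \<Rightarrow> 'o \<Rightarrow> 'a"

definition monoidal :: "('o,'a) moncat \<Rightarrow> bool" where
  "monoidal M \<longleftrightarrow> category M \<and> bifunctor M M M (tens_o M) (tens_a M) \<and> unit_o M \<in> Ob M \<and>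
   (\<forall>m\<in>Ob M. iso_pair M (tens_o M (unit_o M) m) m (lam M m) (lam_inv M m)) \<and>
   (\<forall>m\<in>Ob M. iso_pair M (tens_o M m (unit_o M)) m (rho M m) (rho_inv M m)) \<and>
   (\<forall>m\<in>Ob M. \<forall>n\<in>Ob M. \<forall>k\<in>Ob M.
      iso_pair M (tens_o M (tens_o M m n) k) (tens_o M m (tens_o M n k)) (mas M m n k) (mas_inv M m n k)) \<and>
   (\<forall>m m' u. m \<in> Ob M \<and> m' \<in> Ob M \<and> u \<in> Hom M m m' \<longrightarrow>
      cmp M (tens_a M (idm M (unit_o M)) u) (lam M m') = cmp M (lam M m) u \<and>
      cmp M (tens_a M u (idm M (unit_o M))) (rho M m') = cmp M (rho M m) u) \<and>
   (\<forall>m m' n n' k k' u v w. m \<in> Ob M \<and> m' \<in> Ob M \<and> n \<in> Ob M \<and> n' \<in> Ob M \<and> k \<in> Ob M \<and> k' \<in> Ob M \<and>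
      u \<in> Hom M m m' \<and> v \<in> Hom M n n' \<and> w \<in> Hom M k k' \<longrightarrow>
      cmp M (tens_a M (tens_a M u v) w) (mas M m' n' k') = cmp M (mas M m n k) (tens_a M u (tens_a M v w))) \<and>
   (\<forall>m\<in>Ob M. \<forall>n\<in>Ob M. \<forall>k\<in>Ob M. \<forall>l\<in>Ob M.
      cmp M (mas M (tens_o M m n) k l) (mas M m n (tens_o M k l)) =
      cmp M (cmp M (tens_a M (mas M m n k) (idm M l)) (mas M m (tens_o M n k) l))
            (tens_a M (idm M m) (mas M n k l))) \<and>
   (\<forall>m\<in>Ob M. \<forall>n\<in>Ob M.
      cmp M (mas M m (unit_o M) n) (tens_a M (idm M m) (lam M n)) = tens_a M (rho M m) (idm M n))"

record ('m,'ma,'o,'a) actg = "('o,'a) cat" +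
  act_o :: "'m \<Rightarrow> 'o \<Rightarrow> 'o"
  act_a :: "'ma \<Rightarrow> 'a \<Rightarrow> 'a"
  alam :: "'o \<Rightarrow> 'a"
  alam_inv :: "'o \<Rightarrow> 'a"
  aas :: "'m \<Rightarrow> 'm \<Rightarrow> 'o \<Rightarrow> 'a"
  aas_inv :: "'m \<Rightarrow> 'm \<Rightarrow> 'o \<Rightarrow> 'a"

definition actegory :: "('m,'ma) moncat \<Rightarrow> ('m,'ma,'o,'a) actg \<Rightarrow> bool" where
  "actegory M C \<longleftrightarrow> monoidal M \<and> category C \<and> bifunctor M C C (act_o C) (act_a C) \<and>
   (\<forall>x\<in>Ob C. iso_pair C (act_o C (unit_o M) x) x (alam C x) (alam_inv C x)) \<and>
   (\<forall>m\<in>Ob M. \<forall>n\<in>Ob M. \<forall>x\<in>Ob C.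
      iso_pair C (act_o C (tens_o M m n) x) (act_o C m (act_o C n x)) (aas C m n x) (aas_inv C m n x)) \<and>
   (\<forall>x y f. x \<in> Ob C \<and> y \<in> Ob C \<and> f \<in> Hom C x y \<longrightarrow>
      cmp C (act_a C (idm M (unit_o M)) f) (alam C y) = cmp C (alam C x) f) \<and>
   (\<forall>m m' n n' x x' u v f. m \<in> Ob M \<and> m' \<in> Ob M \<and> n \<in> Ob M \<and> n' \<in> Ob M \<and> x \<in> Ob C \<and> x' \<in> Ob C \<and>
      u \<in> Hom M m m' \<and> v \<in> Hom M n n' \<and> f \<in> Hom C x x' \<longrightarrow>
      cmp C (act_a C (tens_a M u v) f) (aas C m' n' x') = cmp C (aas C m n x) (act_a C u (act_a C v f))) \<and>
   (\<forall>m\<in>Ob M. \<forall>n\<in>Ob M. \<forall>k\<in>Ob M. \<forall>x\<in>Ob C.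
      cmp C (aas C (tens_o M m n) k x) (aas C m n (act_o C k x)) =
      cmp C (cmp C (act_a C (mas M m n k) (idm C x)) (aas C m (tens_o M n k) x))
            (act_a C (idm M m) (aas C n k x))) \<and>
   (\<forall>m\<in>Ob M. \<forall>x\<in>Ob C.
      cmp C (aas C m (unit_o M) x) (act_a C (idm M m) (alam C x)) = act_a C (rho M m) (idm C x)) \<and>
   (\<forall>m\<in>Ob M. \<forall>x\<in>Ob C.
      cmp C (aas C (unit_o M) m x) (alam C (act_o C m x)) = act_a C (lam M m) (idm C x))"

definition selfact :: "('m,'ma) moncat \<Rightarrow> ('m,'ma,'m,'ma) actg" where
  "selfact M = \<lparr> Ob = Ob M, Hom = Hom M, cmp = cmp M, idm = idm M,
     act_o = tens_o M, act_a = tens_a M, alam = lam M, alam_inv = lam_inv M,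
     aas = mas M, aas_inv = mas_inv M \<rparr>"

text \<open>plm P c' c d f p : P(c,d) -> P(c',d) for f : c' -> c;
  prm P c d d' g p : P(c,d) -> P(c,d') for g : d -> d';
  pst P m c d p : P(c,d) -> P(m.c, m.d).\<close>
record ('c,'ca,'d,'da,'m,'e) prof =
  pob :: "'c \<Rightarrow> 'd \<Rightarrow> 'e set"
  plm :: "'c \<Rightarrow> 'c \<Rightarrow> 'd \<Rightarrow> 'ca \<Rightarrow> 'e \<Rightarrow> 'e"
  prm :: "'c \<Rightarrow> 'd \<Rightarrow> 'd \<Rightarrow> 'da \<Rightarrow> 'e \<Rightarrow> 'e"
  pst :: "'m \<Rightarrow> 'c \<Rightarrow> 'd \<Rightarrow> 'e \<Rightarrow> 'e"

definition tamb_mor where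
  "tamb_mor M A B P Q \<alpha> \<longleftrightarrow>
    (\<forall>a\<in>Ob A. \<forall>b\<in>Ob B. \<forall>p\<in>pob P a b. \<alpha> a b p \<in> pob Q a b) \<and>
    (\<forall>a a' b f p. a \<in> Ob A \<and> a' \<in> Ob A \<and> b \<in> Ob B \<and> f \<in> Hom A a' a \<and> p \<in> pob P a b \<longrightarrow>
        \<alpha> a' b (plm P a' a b f p) = plm Q a' a b f (\<alpha> a b p)) \<and>
    (\<forall>a b b' g p. a \<in> Ob A \<and> b \<in> Ob B \<and> b' \<in> Ob B \<and> g \<in> Hom B b b' \<and> p \<in> pob P a b \<longrightarrow>
        \<alpha> a b' (prm P a b b' g p) = prm Q a b b' g (\<alpha> a b p)) \<and>
    (\<forall>m a b p. m \<in> Ob M \<and> a \<in> Ob A \<and> b \<in> Ob B \<and> p \<in> pob P a b \<longrightarrow>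
        \<alpha> (act_o A m a) (act_o B m b) (pst P m a b p) = pst Q m a b (\<alpha> a b p))"

definition ce_step where
  "ce_step D P Q c e = {((d', prm P c d d' g p, q), (d, p, plm Q d d' e g q)) | d d' g p q.
      d \<in> Ob D \<and> d' \<in> Ob D \<and> g \<in> Hom D d d' \<and> p \<in> pob P c d \<and> q \<in> pob Q d' e}"

definition ce_cls where
  "ce_cls D P Q c e t = {t'. (t, t') \<in> (ce_step D P Q c e \<union> (ce_step D P Q c e)\<inverse>)\<^sup>*}"

definition coend where
  "coend D P Q c e = ce_cls D P Q c e ` {(d, p, q). d \<in> Ob D \<and> p \<in> pob P c d \<and> q \<in> pob Q d e}"

definition rep :: "'a set \<Rightarrow> 'a" where
  "rep X = (SOME t. t \<in> X)"

text \<open>Composite P (x) Q of P : A -|-> D and Q : D -|-> B (profunctor action and strength on representatives).\<close>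
definition pcomp where
  "pcomp A D B P Q = \<lparr> pob = coend D P Q,
     plm = (\<lambda>c' c e f \<xi>. case rep \<xi> of (d, p, q) \<Rightarrow> ce_cls D P Q c' e (d, plm P c' c d f p, q)),
     prm = (\<lambda>c e e' g \<xi>. case rep \<xi> of (d, p, q) \<Rightarrow> ce_cls D P Q c e' (d, p, prm Q d e e' g q)),
     pst = (\<lambda>m c e \<xi>. case rep \<xi> of (d, p, q) \<Rightarrow>
        ce_cls D P Q (act_o A m c) (act_o B m e) (act_o D m d, pst P m c d p, pst Q m d e q)) \<rparr>"

text \<open>Hom profunctor A(-,=) (identity 1-cell), strength h |-> m . h.\<close>
definition homP where
  "homP M A = \<lparr> pob = Hom A, plm = (\<lambda>c' c d f h. cmp A f h), prm = (\<lambda>c d d' g h. cmp A h g),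
     pst = (\<lambda>m c d h. act_a A (idm M m) h) \<rparr>"

definition Rp where
  "Rp M C x = \<lparr> pob = (\<lambda>c n. Hom C c (act_o C n x)),
     plm = (\<lambda>c' c n f h. cmp C f h),
     prm = (\<lambda>c n n' u h. cmp C h (act_a C u (idm C x))),
     pst = (\<lambda>m c n h. cmp C (act_a C (idm M m) h) (aas_inv C m n x)) \<rparr>"

definition Lp where
  "Lp M C x = \<lparr> pob = (\<lambda>n c. Hom C (act_o C n x) c),
     plm = (\<lambda>n' n c u h. cmp C (act_a C u (idm C x)) h),
     prm = (\<lambda>n c c' g h. cmp C h g),
     pst = (\<lambda>m n c h. cmp C (aas C m n x) (act_a C (idm M m) h)) \<rparr>"

definition Rmor where
  "Rmor M C f = (\<lambda>c n h. cmp C h (act_a C (idm M n) f))"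

definition Lmor where
  "Lmor M C f = (\<lambda>n c h. cmp C (act_a C (idm M n) f) h)"

definition eps where
  "eps C x = (\<lambda>c c' \<xi>. case rep \<xi> of (n, h, k) \<Rightarrow> cmp C h k)"

definition eta where  (* h |-> h . x, viewed in the coend via g |-> [(k'.x, g, id)] *)
  "eta M C x = (\<lambda>k k' h. ce_cls C (Lp M C x) (Rp M C x) k k'
      (act_o C k' x, act_a C h (idm C x), idm C (act_o C k' x)))"

definition wL where
  "wL D P' Q \<alpha> c e \<xi> = (case rep \<xi> of (d, p, q) \<Rightarrow> ce_cls D P' Q c e (d, \<alpha> c d p, q))"

definition wR where
  "wR D P Q' \<beta> c e \<xi> = (case rep \<xi> of (d, p, q) \<Rightarrow> ce_cls D P Q' c e (d, p, \<beta> d e q))"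

definition lunit where
  "lunit P c d \<xi> = (case rep \<xi> of (c', f, p) \<Rightarrow> plm P c c' d f p)"

definition lunitI where
  "lunitI M A P c d p = ce_cls A (homP M A) P c d (c, idm A c, p)"

definition runit where
  "runit P c d \<xi> = (case rep \<xi> of (d', p, g) \<Rightarrow> prm P c d' d g p)"

definition runitI where
  "runitI M B P c d p = ce_cls B P (homP M B) c d (d, p, idm B d)"

definition assocF where
  "assocF D E F P Q R c f \<xi> = (case rep \<xi> of (e, \<zeta>, r) \<Rightarrow> case rep \<zeta> of (d, p, q) \<Rightarrow>
      ce_cls D P (pcomp D E F Q R) c f (d, p, ce_cls E Q R d f (e, q, r)))"

definition assocB where
  "assocB A D E P Q R c f \<xi> = (case rep \<xi> of (d, p, \<zeta>) \<Rightarrow> case rep \<zeta> of (e, q, r) \<Rightarrow>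
      ce_cls E (pcomp A D E P Q) R c f (e, ce_cls D P Q c e (d, p, q), r))"

end

theory Submission
  imports Defs
begin

text \<open>The counit sends a class [n, h, k] in the coend of R_x and L_x to the composite h;k; this is
  well defined because moving an arrow u : n -> n' of M across the class only re-brackets h;(u.x);k.
  The coend of L_x and R_y at (k, k') is C(k.x, k'.y) by the co-Yoneda lemma: every class [d, p, q]
  equals [k'.y, p;q, id].  In these terms the unit is h |-> h.x, the counit is composition, and the
  two triangle identities evaluate to h;(id.x) = h and (id.x);h = h.  That both maps are morphisms of
  Tambara modules, and dinatural in x, comes down to functoriality of the action and naturality of
  the associator of the actegory.\<close>

section \<open>Coend classes\<close>

lemma ce_cls_refl: "t \<in> ce_cls D P Q c e t"
  unfolding ce_cls_def by simp

lemma rep_ce_cls_in: "rep (ce_cls D P Q c e t) \<in> ce_cls D P Q c e t"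
  unfolding rep_def by (rule someI) (rule ce_cls_refl)

lemma ce_cls_eq:
  assumes "t' \<in> ce_cls D P Q c e t"
  shows "ce_cls D P Q c e t' = ce_cls D P Q c e t"
proof -
  let ?R = "(ce_step D P Q c e \<union> (ce_step D P Q c e)\<inverse>)\<^sup>*"
  have "(t, t') \<in> ?R" using assms unfolding ce_cls_def by simp
  moreover have "sym ?R" by (intro sym_rtrancl sym_Un_converse)
  ultimately have "(t', t) \<in> ?R" by (meson symD)
  with \<open>(t, t') \<in> ?R\<close> show ?thesis
    unfolding ce_cls_def by (auto intro: rtrancl_trans)
qed

lemma ce_cls_invariant:
  assumes "\<And>a b. (a, b) \<in> ce_step D P Q c e \<Longrightarrow> \<phi> a = \<phi> b"
    and "t' \<in> ce_cls D P Q c e t"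
  shows "\<phi> t' = \<phi> t"
proof -
  have "(t, t') \<in> (ce_step D P Q c e \<union> (ce_step D P Q c e)\<inverse>)\<^sup>*"
    using assms(2) unfolding ce_cls_def by simp
  then show ?thesis
    by (induction rule: rtrancl_induct) (auto dest: assms(1))
qed

lemma ce_stepE:
  assumes "(a, b) \<in> ce_step D P Q c e"
  obtains d d' g p q where "a = (d', prm P c d d' g p, q)" "b = (d, p, plm Q d d' e g q)"
    "d \<in> Ob D" "d' \<in> Ob D" "g \<in> Hom D d d'" "p \<in> pob P c d" "q \<in> pob Q d' e"
  using assms unfolding ce_step_def by blast

lemma ce_cls_step:
  assumes "d \<in> Ob D" "d' \<in> Ob D" "g \<in> Hom D d d'" "p \<in> pob P c d" "q \<in> pob Q d' e"
  shows "ce_cls D P Q c e (d', prm P c d d' g p, q) = ce_cls D P Q c e (d, p, plm Q d d' e g q)"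
proof -
  have "((d', prm P c d d' g p, q), (d, p, plm Q d d' e g q)) \<in> ce_step D P Q c e"
    unfolding ce_step_def using assms by blast
  then show ?thesis
    by (intro ce_cls_eq[symmetric]) (auto simp: ce_cls_def)
qed

lemma ce_cls_in_coend:
  assumes "d \<in> Ob D" "p \<in> pob P c d" "q \<in> pob Q d e"
  shows "ce_cls D P Q c e (d, p, q) \<in> coend D P Q c e"
  unfolding coend_def using assms by blast

lemma coend_repE:
  assumes prm_closed: "\<And>d d' g p. d \<in> Ob D \<Longrightarrow> d' \<in> Ob D \<Longrightarrow> g \<in> Hom D d d' \<Longrightarrow>
      p \<in> pob P c d \<Longrightarrow> prm P c d d' g p \<in> pob P c d'"
    and plm_closed: "\<And>d d' g q. d \<in> Ob D \<Longrightarrow> d' \<in> Ob D \<Longrightarrow> g \<in> Hom D d d' \<Longrightarrow>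
      q \<in> pob Q d' e \<Longrightarrow> plm Q d d' e g q \<in> pob Q d e"
    and "\<xi> \<in> coend D P Q c e"
  obtains d p q where "rep \<xi> = (d, p, q)" "\<xi> = ce_cls D P Q c e (d, p, q)"
    "d \<in> Ob D" "p \<in> pob P c d" "q \<in> pob Q d e"
proof -
  let ?valid = "\<lambda>(d, p, q). d \<in> Ob D \<and> p \<in> pob P c d \<and> q \<in> pob Q d e"
  obtain t where t: "?valid t" "\<xi> = ce_cls D P Q c e t"
    using assms(3) unfolding coend_def by auto
  have rep: "rep \<xi> \<in> ce_cls D P Q c e t"
    using t(2) rep_ce_cls_in by metis
  have "?valid (rep \<xi>) = ?valid t"
    using rep by (rule ce_cls_invariant[rotated]) (auto elim!: ce_stepE simp: prm_closed plm_closed)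
  moreover have "\<xi> = ce_cls D P Q c e (rep \<xi>)"
    using ce_cls_eq[OF rep] t(2) by simp
  ultimately show ?thesis
    using that t(1) by (cases "rep \<xi>") auto
qed

text \<open>The universal property of the coend: a function of representatives that is dinatural
  in the bound variable is well defined on classes.\<close>

lemma case_rep_ce_cls:
  assumes "\<And>d d' g p q. d \<in> Ob D \<Longrightarrow> d' \<in> Ob D \<Longrightarrow> g \<in> Hom D d d' \<Longrightarrow> p \<in> pob P c d \<Longrightarrow>
      q \<in> pob Q d' e \<Longrightarrow> G d' (prm P c d d' g p) q = G d p (plm Q d d' e g q)"
  shows "(case rep (ce_cls D P Q c e (d0, p0, q0)) of (d, p, q) \<Rightarrow> G d p q) = G d0 p0 q0"
proof -
  have "(\<lambda>(d, p, q). G d p q) (rep (ce_cls D P Q c e (d0, p0, q0))) = (\<lambda>(d, p, q). G d p q) (d0, p0, q0)"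
    using rep_ce_cls_in by (rule ce_cls_invariant[rotated]) (auto elim!: ce_stepE simp: assms)
  then show ?thesis by simp
qed

lemma homP_simps [simp]:
  "pob (homP M A) = Hom A" "plm (homP M A) = (\<lambda>c' c d f h. cmp A f h)"
  "prm (homP M A) = (\<lambda>c d d' g h. cmp A h g)" "pst (homP M A) = (\<lambda>m c d h. act_a A (idm M m) h)"
  by (simp_all add: homP_def)

lemma pob_pcomp [simp]: "pob (pcomp A D B P Q) = coend D P Q"
  by (simp add: pcomp_def)

lemma wL_ce_cls:
  assumes "\<And>d d' g p. d \<in> Ob D \<Longrightarrow> d' \<in> Ob D \<Longrightarrow> g \<in> Hom D d d' \<Longrightarrow> p \<in> pob P c d \<Longrightarrow>
      \<alpha> c d p \<in> pob P' c d \<and> \<alpha> c d' (prm P c d d' g p) = prm P' c d d' g (\<alpha> c d p)"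
  shows "wL D P' Q \<alpha> c e (ce_cls D P Q c e (d0, p0, q0)) = ce_cls D P' Q c e (d0, \<alpha> c d0 p0, q0)"
  unfolding wL_def by (rule case_rep_ce_cls) (simp add: assms ce_cls_step)

lemma wR_ce_cls:
  assumes "\<And>d d' g q. d \<in> Ob D \<Longrightarrow> d' \<in> Ob D \<Longrightarrow> g \<in> Hom D d d' \<Longrightarrow> q \<in> pob Q d' e \<Longrightarrow>
      \<beta> d' e q \<in> pob Q' d' e \<and> \<beta> d e (plm Q d d' e g q) = plm Q' d d' e g (\<beta> d' e q)"
  shows "wR D P Q' \<beta> c e (ce_cls D P Q c e (d0, p0, q0)) = ce_cls D P Q' c e (d0, p0, \<beta> d0 e q0)"
  unfolding wR_def by (rule case_rep_ce_cls) (simp add: assms ce_cls_step)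

lemma lunit_ce_cls:
  assumes "\<And>d d' g f p. d \<in> Ob A \<Longrightarrow> d' \<in> Ob A \<Longrightarrow> g \<in> Hom A d d' \<Longrightarrow> f \<in> Hom A c d \<Longrightarrow>
      p \<in> pob P d' e \<Longrightarrow> plm P c d' e (cmp A f g) p = plm P c d e f (plm P d d' e g p)"
  shows "lunit P c e (ce_cls A (homP M A) P c e (d0, f0, p0)) = plm P c d0 e f0 p0"
  unfolding lunit_def by (rule case_rep_ce_cls) (simp add: assms)

lemma runit_ce_cls:
  assumes "\<And>d d' g q p. d \<in> Ob B \<Longrightarrow> d' \<in> Ob B \<Longrightarrow> g \<in> Hom B d d' \<Longrightarrow> p \<in> pob P c d \<Longrightarrow>
      q \<in> Hom B d' e \<Longrightarrow> prm P c d' e q (prm P c d d' g p) = prm P c d e (cmp B g q) p"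
  shows "runit P c e (ce_cls B P (homP M B) c e (d0, p0, g0)) = prm P c d0 e g0 p0"
  unfolding runit_def by (rule case_rep_ce_cls) (simp add: assms)

lemma pcomp_plm_ce_cls:
  assumes "\<And>d d' g p. d \<in> Ob D \<Longrightarrow> d' \<in> Ob D \<Longrightarrow> g \<in> Hom D d d' \<Longrightarrow> p \<in> pob P c d \<Longrightarrow>
      plm P c' c d f p \<in> pob P c' d \<and>
      plm P c' c d' f (prm P c d d' g p) = prm P c' d d' g (plm P c' c d f p)"
  shows "plm (pcomp A D B P Q) c' c e f (ce_cls D P Q c e (d0, p0, q0))
    = ce_cls D P Q c' e (d0, plm P c' c d0 f p0, q0)"
  unfolding pcomp_def by simp (rule case_rep_ce_cls, simp add: assms ce_cls_step)

lemma pcomp_prm_ce_cls: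
  assumes "\<And>d d' g q. d \<in> Ob D \<Longrightarrow> d' \<in> Ob D \<Longrightarrow> g \<in> Hom D d d' \<Longrightarrow> q \<in> pob Q d' e \<Longrightarrow>
      prm Q d' e e' f q \<in> pob Q d' e' \<and>
      prm Q d e e' f (plm Q d d' e g q) = plm Q d d' e' g (prm Q d' e e' f q)"
  shows "prm (pcomp A D B P Q) c e e' f (ce_cls D P Q c e (d0, p0, q0))
    = ce_cls D P Q c e' (d0, p0, prm Q d0 e e' f q0)"
  unfolding pcomp_def by simp (rule case_rep_ce_cls, simp add: assms ce_cls_step)

lemma selfact_simps [simp]:
  "Ob (selfact M) = Ob M" "Hom (selfact M) = Hom M" "cmp (selfact M) = cmp M"
  "idm (selfact M) = idm M" "act_o (selfact M) = tens_o M" "act_a (selfact M) = tens_a M"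
  by (simp_all add: selfact_def)

lemma Rp_simps [simp]:
  "pob (Rp M C x) = (\<lambda>c n. Hom C c (act_o C n x))"
  "plm (Rp M C x) = (\<lambda>c' c n f h. cmp C f h)"
  "prm (Rp M C x) = (\<lambda>c n n' u h. cmp C h (act_a C u (idm C x)))"
  "pst (Rp M C x) = (\<lambda>m c n h. cmp C (act_a C (idm M m) h) (aas_inv C m n x))"
  by (simp_all add: Rp_def)

lemma Lp_simps [simp]:
  "pob (Lp M C x) = (\<lambda>n c. Hom C (act_o C n x) c)"
  "plm (Lp M C x) = (\<lambda>n' n c u h. cmp C (act_a C u (idm C x)) h)"
  "prm (Lp M C x) = (\<lambda>n c c' g h. cmp C h g)"
  "pst (Lp M C x) = (\<lambda>m n c h. cmp C (aas C m n x) (act_a C (idm M m) h))"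
  by (simp_all add: Lp_def)

locale category_laws =
  fixes C :: "('o, 'a, 'z) cat_scheme"
  assumes category: "category C"
begin

lemma dom_ob: "f \<in> Hom C a b \<Longrightarrow> a \<in> Ob C"
  and cod_ob: "f \<in> Hom C a b \<Longrightarrow> b \<in> Ob C"
  and id_hom: "a \<in> Ob C \<Longrightarrow> idm C a \<in> Hom C a a"
  and comp_hom: "f \<in> Hom C a b \<Longrightarrow> g \<in> Hom C b c \<Longrightarrow> cmp C f g \<in> Hom C a c"
  and id_left: "f \<in> Hom C a b \<Longrightarrow> cmp C (idm C a) f = f"
  and id_right: "f \<in> Hom C a b \<Longrightarrow> cmp C f (idm C b) = f"
  and comp_assoc: "f \<in> Hom C a b \<Longrightarrow> g \<in> Hom C b c \<Longrightarrow> h \<in> Hom C c d \<Longrightarrow>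
    cmp C (cmp C f g) h = cmp C f (cmp C g h)"
  using category unfolding category_def by blast+

end

locale bifunctor_laws =
  A: category_laws A + B: category_laws B + D: category_laws D
  for A :: "('o1, 'a1, 'z1) cat_scheme" and B :: "('o2, 'a2, 'z2) cat_scheme"
    and D :: "('o3, 'a3, 'z3) cat_scheme" and Fo Fa +
  assumes bifunctor: "bifunctor A B D Fo Fa"
begin

lemma ob_closed: "a \<in> Ob A \<Longrightarrow> b \<in> Ob B \<Longrightarrow> Fo a b \<in> Ob D"
  using bifunctor unfolding bifunctor_def by blast

lemma hom_closed: "u \<in> Hom A a a' \<Longrightarrow> f \<in> Hom B b b' \<Longrightarrow> Fa u f \<in> Hom D (Fo a b) (Fo a' b')"
  using bifunctor A.dom_ob A.cod_ob B.dom_ob B.cod_ob unfolding bifunctor_def by meson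

lemma preserves_id: "a \<in> Ob A \<Longrightarrow> b \<in> Ob B \<Longrightarrow> Fa (idm A a) (idm B b) = idm D (Fo a b)"
  using bifunctor unfolding bifunctor_def by blast

lemma preserves_comp:
  assumes "u \<in> Hom A a a'" "u' \<in> Hom A a' a''" "f \<in> Hom B b b'" "f' \<in> Hom B b' b''"
  shows "Fa (cmp A u u') (cmp B f f') = cmp D (Fa u f) (Fa u' f')"
proof -
  have "a \<in> Ob A" "a' \<in> Ob A" "a'' \<in> Ob A" "b \<in> Ob B" "b' \<in> Ob B" "b'' \<in> Ob B"
    using assms A.dom_ob A.cod_ob B.dom_ob B.cod_ob by blast+
  with assms bifunctor show ?thesis unfolding bifunctor_def by blast
qed

end

locale actegory_ctx =
  fixes M :: "('m, 'ma) moncat" and C :: "('m, 'ma, 'c, 'ca) actg"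
  assumes actegory: "actegory M C"
begin

sublocale M: category_laws M
  using actegory unfolding actegory_def monoidal_def by unfold_locales blast

sublocale C: category_laws C
  using actegory unfolding actegory_def by unfold_locales blast

sublocale act: bifunctor_laws M C C "act_o C" "act_a C"
  using actegory unfolding actegory_def by unfold_locales blast

sublocale tens: bifunctor_laws M M M "tens_o M" "tens_a M"
  using actegory unfolding actegory_def monoidal_def by unfold_locales blast

lemma aas_iso_pair: "m \<in> Ob M \<Longrightarrow> n \<in> Ob M \<Longrightarrow> y \<in> Ob C \<Longrightarrow>
    iso_pair C (act_o C (tens_o M m n) y) (act_o C m (act_o C n y)) (aas C m n y) (aas_inv C m n y)"
  using actegory unfolding actegory_def by (elim conjE) simp

lemma aas_hom: "m \<in> Ob M \<Longrightarrow> n \<in> Ob M \<Longrightarrow> y \<in> Ob C \<Longrightarrow>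
    aas C m n y \<in> Hom C (act_o C (tens_o M m n) y) (act_o C m (act_o C n y))"
  and aas_inv_hom: "m \<in> Ob M \<Longrightarrow> n \<in> Ob M \<Longrightarrow> y \<in> Ob C \<Longrightarrow>
    aas_inv C m n y \<in> Hom C (act_o C m (act_o C n y)) (act_o C (tens_o M m n) y)"
  and aas_aas_inv: "m \<in> Ob M \<Longrightarrow> n \<in> Ob M \<Longrightarrow> y \<in> Ob C \<Longrightarrow>
    cmp C (aas C m n y) (aas_inv C m n y) = idm C (act_o C (tens_o M m n) y)"
  and aas_inv_aas: "m \<in> Ob M \<Longrightarrow> n \<in> Ob M \<Longrightarrow> y \<in> Ob C \<Longrightarrow>
    cmp C (aas_inv C m n y) (aas C m n y) = idm C (act_o C m (act_o C n y))"
  using aas_iso_pair unfolding iso_pair_def by blast+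

lemma aas_natural:
  assumes "u \<in> Hom M m m'" "v \<in> Hom M n n'" "f \<in> Hom C y y'"
  shows "cmp C (act_a C (tens_a M u v) f) (aas C m' n' y') = cmp C (aas C m n y) (act_a C u (act_a C v f))"
proof -
  have "m \<in> Ob M" "m' \<in> Ob M" "n \<in> Ob M" "n' \<in> Ob M" "y \<in> Ob C" "y' \<in> Ob C"
    using assms M.dom_ob M.cod_ob C.dom_ob C.cod_ob by blast+
  with assms actegory show ?thesis unfolding actegory_def by blast
qed


lemma act_id_hom: "u \<in> Hom M n n' \<Longrightarrow> y \<in> Ob C \<Longrightarrow>
    act_a C u (idm C y) \<in> Hom C (act_o C n y) (act_o C n' y)"
  by (intro act.hom_closed C.id_hom)

lemma id_act_hom: "m \<in> Ob M \<Longrightarrow> f \<in> Hom C y y' \<Longrightarrow>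
    act_a C (idm M m) f \<in> Hom C (act_o C m y) (act_o C m y')"
  by (intro act.hom_closed M.id_hom)

lemma act_comp_id: "u \<in> Hom M a b \<Longrightarrow> v \<in> Hom M b c \<Longrightarrow> y \<in> Ob C \<Longrightarrow>
    act_a C (cmp M u v) (idm C y) = cmp C (act_a C u (idm C y)) (act_a C v (idm C y))"
  using act.preserves_comp[OF _ _ C.id_hom C.id_hom] C.id_left[OF C.id_hom] by metis

lemma id_act_comp: "m \<in> Ob M \<Longrightarrow> f \<in> Hom C a b \<Longrightarrow> g \<in> Hom C b c \<Longrightarrow>
    act_a C (idm M m) (cmp C f g) = cmp C (act_a C (idm M m) f) (act_a C (idm M m) g)"
  using act.preserves_comp[OF M.id_hom M.id_hom] M.id_left[OF M.id_hom] by metis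

lemma act_tens_id_eq_aas_conj:
  assumes "m \<in> Ob M" "h \<in> Hom M k k'" "y \<in> Ob C"
  shows "cmp C (cmp C (aas C m k y) (act_a C (idm M m) (act_a C h (idm C y)))) (aas_inv C m k' y)
    = act_a C (tens_a M (idm M m) h) (idm C y)"
proof -
  have k': "k' \<in> Ob M" using assms M.cod_ob by blast
  have t: "act_a C (tens_a M (idm M m) h) (idm C y)
      \<in> Hom C (act_o C (tens_o M m k) y) (act_o C (tens_o M m k') y)"
    using assms by (intro act_id_hom tens.hom_closed M.id_hom)
  have "cmp C (aas C m k y) (act_a C (idm M m) (act_a C h (idm C y)))
      = cmp C (act_a C (tens_a M (idm M m) h) (idm C y)) (aas C m k' y)"
    using aas_natural[OF M.id_hom[OF assms(1)] assms(2) C.id_hom[OF assms(3)]] by simp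
  then show ?thesis
    using C.comp_assoc[OF t aas_hom aas_inv_hom] assms k' t
    by (simp add: aas_aas_inv C.id_right)
qed

lemma coend_RL_repE:
  assumes "x \<in> Ob C" "x' \<in> Ob C" "\<xi> \<in> coend (selfact M) (Rp M C x) (Lp M C x') c c'"
  obtains n h k where "rep \<xi> = (n, h, k)" "\<xi> = ce_cls (selfact M) (Rp M C x) (Lp M C x') c c' (n, h, k)"
    "n \<in> Ob M" "h \<in> Hom C c (act_o C n x)" "k \<in> Hom C (act_o C n x') c'"
  by (rule coend_repE[OF _ _ assms(3)]) (use assms in \<open>auto intro: C.comp_hom act_id_hom\<close>)

lemma coend_LR_repE:
  assumes "\<zeta> \<in> coend C (Lp M C x) (Rp M C x) k k'"
  obtains d p q where "rep \<zeta> = (d, p, q)" "\<zeta> = ce_cls C (Lp M C x) (Rp M C x) k k' (d, p, q)"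
    "d \<in> Ob C" "p \<in> Hom C (act_o C k x) d" "q \<in> Hom C d (act_o C k' x)"
  by (rule coend_repE[OF _ _ assms]) (auto intro: C.comp_hom)

lemma eps_eq_rep: "rep \<xi> = (n, h, k) \<Longrightarrow> eps C x c c' \<xi> = cmp C h k"
  unfolding eps_def by simp

lemma eps_RL_ce_cls: "x \<in> Ob C \<Longrightarrow>
    eps C x c c' (ce_cls (selfact M) (Rp M C x) (Lp M C x) c c' (n, h, k)) = cmp C h k"
  unfolding eps_def by (rule case_rep_ce_cls) (simp, metis C.comp_assoc act_id_hom)

lemma eps_LR_ce_cls: "eps C x k k' (ce_cls C (Lp M C x) (Rp M C x) k k' (d, p, q)) = cmp C p q"
  unfolding eps_def by (rule case_rep_ce_cls) (simp add: C.comp_assoc)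

lemma ce_cls_LR_collapse:
  assumes "k' \<in> Ob M" "y \<in> Ob C" "p \<in> Hom C (act_o C k x) d" "q \<in> Hom C d (act_o C k' y)"
  shows "ce_cls C (Lp M C x) (Rp M C y) k k' (d, p, q)
    = ce_cls C (Lp M C x) (Rp M C y) k k' (act_o C k' y, cmp C p q, idm C (act_o C k' y))"
proof -
  have ky: "act_o C k' y \<in> Ob C" using assms by (simp add: act.ob_closed)
  have "ce_cls C (Lp M C x) (Rp M C y) k k' (act_o C k' y, prm (Lp M C x) k d (act_o C k' y) q p, idm C (act_o C k' y))
    = ce_cls C (Lp M C x) (Rp M C y) k k' (d, p, plm (Rp M C y) d (act_o C k' y) k' q (idm C (act_o C k' y)))"
    using assms ky by (intro ce_cls_step) (auto intro: C.dom_ob C.id_hom)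
  then show ?thesis using assms by (simp add: C.id_right)
qed

end

section \<open>The counit and the unit\<close>

locale actegory_obj = actegory_ctx +
  fixes x :: 'c
  assumes x_ob: "x \<in> Ob C"
begin

abbreviation "Rx \<equiv> Rp M C x"
abbreviation "Lx \<equiv> Lp M C x"
abbreviation "RLx \<equiv> pcomp C (selfact M) C Rx Lx"
abbreviation "LRx \<equiv> pcomp (selfact M) C (selfact M) Lx Rx"

lemma eps_hom: "\<xi> \<in> coend (selfact M) Rx Lx c c' \<Longrightarrow> eps C x c c' \<xi> \<in> Hom C c c'"
  by (erule coend_RL_repE[OF x_ob x_ob]) (simp add: eps_eq_rep C.comp_hom)

lemma eps_plm:
  assumes "\<xi> \<in> coend (selfact M) Rx Lx c c'" "f \<in> Hom C c'' c"
  shows "eps C x c'' c' (plm RLx c'' c c' f \<xi>) = cmp C f (eps C x c c' \<xi>)"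
proof -
  obtain n h k where "rep \<xi> = (n, h, k)" "h \<in> Hom C c (act_o C n x)" "k \<in> Hom C (act_o C n x) c'"
    using coend_RL_repE[OF x_ob x_ob assms(1)] by metis
  with assms(2) show ?thesis
    by (simp add: pcomp_def eps_RL_ce_cls x_ob eps_eq_rep C.comp_assoc)
qed

lemma eps_prm:
  assumes "\<xi> \<in> coend (selfact M) Rx Lx c c'" "g \<in> Hom C c' c''"
  shows "eps C x c c'' (prm RLx c c' c'' g \<xi>) = cmp C (eps C x c c' \<xi>) g"
proof -
  obtain n h k where "rep \<xi> = (n, h, k)" "h \<in> Hom C c (act_o C n x)" "k \<in> Hom C (act_o C n x) c'"
    using coend_RL_repE[OF x_ob x_ob assms(1)] by metis
  with assms(2) show ?thesis
    by (simp add: pcomp_def eps_RL_ce_cls x_ob eps_eq_rep C.comp_assoc)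
qed

lemma eps_pst:
  assumes "\<xi> \<in> coend (selfact M) Rx Lx c c'" "m \<in> Ob M"
  shows "eps C x (act_o C m c) (act_o C m c') (pst RLx m c c' \<xi>) = act_a C (idm M m) (eps C x c c' \<xi>)"
proof -
  obtain n h k where r: "rep \<xi> = (n, h, k)" "n \<in> Ob M"
    "h \<in> Hom C c (act_o C n x)" "k \<in> Hom C (act_o C n x) c'"
    using coend_RL_repE[OF x_ob x_ob assms(1)] by metis
  let ?h = "act_a C (idm M m) h" and ?k = "act_a C (idm M m) k"
    and ?a = "aas C m n x" and ?a' = "aas_inv C m n x"
  have h: "?h \<in> Hom C (act_o C m c) (act_o C m (act_o C n x))"
    and k: "?k \<in> Hom C (act_o C m (act_o C n x)) (act_o C m c')"
    and a: "?a \<in> Hom C (act_o C (tens_o M m n) x) (act_o C m (act_o C n x))"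
    and a': "?a' \<in> Hom C (act_o C m (act_o C n x)) (act_o C (tens_o M m n) x)"
    using r assms(2) x_ob by (simp_all add: id_act_hom aas_hom aas_inv_hom)
  have "eps C x (act_o C m c) (act_o C m c') (pst RLx m c c' \<xi>) = cmp C (cmp C ?h ?a') (cmp C ?a ?k)"
    using r by (simp add: pcomp_def eps_RL_ce_cls x_ob)
  also have "\<dots> = cmp C ?h (cmp C (cmp C ?a' ?a) ?k)"
    using C.comp_assoc[OF h a' C.comp_hom[OF a k]] C.comp_assoc[OF a' a k] by simp
  also have "\<dots> = cmp C ?h ?k"
    using r assms(2) x_ob k by (simp add: aas_inv_aas C.id_left)
  also have "\<dots> = act_a C (idm M m) (eps C x c c' \<xi>)"
    using r assms(2) by (simp add: eps_eq_rep id_act_comp)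
  finally show ?thesis .
qed

lemma eps_tamb_mor: "tamb_mor M C C RLx (homP M C) (eps C x)"
  unfolding tamb_mor_def by (simp add: eps_hom eps_plm eps_prm eps_pst)

lemma LRx_plm_ce_cls:
  assumes "f \<in> Hom M k'' k"
  shows "plm LRx k'' k k' f (ce_cls C Lx Rx k k' (d, p, q))
    = ce_cls C Lx Rx k'' k' (d, cmp C (act_a C f (idm C x)) p, q)"
proof -
  have "plm LRx k'' k k' f (ce_cls C Lx Rx k k' (d, p, q)) = ce_cls C Lx Rx k'' k' (d, plm Lx k'' k d f p, q)"
    using act_id_hom[OF assms x_ob] by (intro pcomp_plm_ce_cls) (auto intro: C.comp_hom C.comp_assoc[symmetric])
  then show ?thesis by simp
qed

lemma LRx_prm_ce_cls:
  assumes "g \<in> Hom M k' k''"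
  shows "prm LRx k k' k'' g (ce_cls C Lx Rx k k' (d, p, q))
    = ce_cls C Lx Rx k k'' (d, p, cmp C q (act_a C g (idm C x)))"
proof -
  have "prm LRx k k' k'' g (ce_cls C Lx Rx k k' (d, p, q)) = ce_cls C Lx Rx k k'' (d, p, prm Rx d k' k'' g q)"
    using act_id_hom[OF assms x_ob] by (intro pcomp_prm_ce_cls) (auto intro: C.comp_hom C.comp_assoc)
  then show ?thesis by simp
qed

lemma LRx_pst_ce_cls:
  assumes "m \<in> Ob M" "k \<in> Ob M" "k' \<in> Ob M"
  shows "pst LRx m k k' (ce_cls C Lx Rx k k' (d, p, q))
    = ce_cls C Lx Rx (tens_o M m k) (tens_o M m k')
        (act_o C m d, cmp C (aas C m k x) (act_a C (idm M m) p), cmp C (act_a C (idm M m) q) (aas_inv C m k' x))"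
proof -
  have "ce_cls C Lx Rx (tens_o M m k) (tens_o M m k')
      (act_o C m d', cmp C (aas C m k x) (act_a C (idm M m) (cmp C p g)), cmp C (act_a C (idm M m) q) (aas_inv C m k' x))
    = ce_cls C Lx Rx (tens_o M m k) (tens_o M m k')
      (act_o C m d, cmp C (aas C m k x) (act_a C (idm M m) p), cmp C (act_a C (idm M m) (cmp C g q)) (aas_inv C m k' x))"
    if "d \<in> Ob C" "d' \<in> Ob C" "g \<in> Hom C d d'"
      "p \<in> Hom C (act_o C k x) d" "q \<in> Hom C d' (act_o C k' x)" for d d' g p q
  proof -
    let ?a = "aas C m k x" and ?a' = "aas_inv C m k' x"
      and ?p = "act_a C (idm M m) p" and ?g = "act_a C (idm M m) g" and ?q = "act_a C (idm M m) q"
    have a: "?a \<in> Hom C (act_o C (tens_o M m k) x) (act_o C m (act_o C k x))"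
      and a': "?a' \<in> Hom C (act_o C m (act_o C k' x)) (act_o C (tens_o M m k') x)"
      and p: "?p \<in> Hom C (act_o C m (act_o C k x)) (act_o C m d)"
      and g: "?g \<in> Hom C (act_o C m d) (act_o C m d')"
      and q: "?q \<in> Hom C (act_o C m d') (act_o C m (act_o C k' x))"
      using that assms x_ob by (simp_all add: aas_hom aas_inv_hom id_act_hom)
    have "cmp C ?a (act_a C (idm M m) (cmp C p g)) = prm Lx (tens_o M m k) (act_o C m d) (act_o C m d') ?g (cmp C ?a ?p)"
      using that assms C.comp_assoc[OF a p g] by (simp add: id_act_comp)
    moreover have "cmp C (act_a C (idm M m) (cmp C g q)) ?a' = plm Rx (act_o C m d) (act_o C m d') (tens_o M m k') ?g (cmp C ?q ?a')"
      using that assms C.comp_assoc[OF g q a'] by (simp add: id_act_comp)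
    moreover have "act_o C m d \<in> Ob C" "act_o C m d' \<in> Ob C"
      using that assms by (simp_all add: act.ob_closed)
    ultimately show ?thesis
      using ce_cls_step[of "act_o C m d" C "act_o C m d'" ?g "cmp C ?a ?p" Lx "tens_o M m k" "cmp C ?q ?a'" Rx "tens_o M m k'"]
        g C.comp_hom[OF a p] C.comp_hom[OF q a'] by simp
  qed
  then show ?thesis
    unfolding pcomp_def by simp (rule case_rep_ce_cls, simp)
qed

lemma eta_LR_coend: "h \<in> Hom M k k' \<Longrightarrow> eta M C x k k' h \<in> coend C Lx Rx k k'"
  unfolding eta_def using x_ob
  by (intro ce_cls_in_coend) (auto intro: act.ob_closed C.id_hom act_id_hom M.cod_ob)

lemma eta_plm:
  assumes "f \<in> Hom M k'' k" "h \<in> Hom M k k'"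
  shows "plm LRx k'' k k' f (eta M C x k k' h) = eta M C x k'' k' (cmp M f h)"
  unfolding eta_def using assms x_ob by (simp add: LRx_plm_ce_cls act_comp_id)

lemma eta_prm:
  assumes "g \<in> Hom M k' k''" "h \<in> Hom M k k'"
  shows "prm LRx k k' k'' g (eta M C x k k' h) = eta M C x k k'' (cmp M h g)"
proof -
  have "prm LRx k k' k'' g (eta M C x k k' h)
      = ce_cls C Lx Rx k k'' (act_o C k' x, act_a C h (idm C x), act_a C g (idm C x))"
    unfolding eta_def using assms C.id_left[OF act_id_hom[OF assms(1) x_ob]] by (simp add: LRx_prm_ce_cls)
  also have "\<dots> = eta M C x k k'' (cmp M h g)"
    unfolding eta_def using assms x_ob
    by (simp add: ce_cls_LR_collapse act_id_hom act_comp_id M.cod_ob)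
  finally show ?thesis .
qed

lemma eta_pst:
  assumes "m \<in> Ob M" "h \<in> Hom M k k'"
  shows "pst LRx m k k' (eta M C x k k' h) = eta M C x (tens_o M m k) (tens_o M m k') (tens_a M (idm M m) h)"
proof -
  have k: "k \<in> Ob M" "k' \<in> Ob M" using assms M.dom_ob M.cod_ob by blast+
  have "pst LRx m k k' (eta M C x k k' h) = ce_cls C Lx Rx (tens_o M m k) (tens_o M m k')
      (act_o C m (act_o C k' x), cmp C (aas C m k x) (act_a C (idm M m) (act_a C h (idm C x))), aas_inv C m k' x)"
    unfolding eta_def using assms k x_ob C.id_left[OF aas_inv_hom[OF assms(1) k(2) x_ob]]
    by (simp add: LRx_pst_ce_cls act.preserves_id act.ob_closed)
  also have "\<dots> = eta M C x (tens_o M m k) (tens_o M m k') (tens_a M (idm M m) h)"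
  proof -
    have "cmp C (aas C m k x) (act_a C (idm M m) (act_a C h (idm C x)))
        \<in> Hom C (act_o C (tens_o M m k) x) (act_o C m (act_o C k' x))"
      using assms k x_ob by (meson C.comp_hom aas_hom id_act_hom act_id_hom)
    then show ?thesis
      unfolding eta_def using assms k x_ob
      by (simp add: ce_cls_LR_collapse tens.ob_closed aas_inv_hom act_tens_id_eq_aas_conj)
  qed
  finally show ?thesis .
qed

lemma eta_tamb_mor: "tamb_mor M (selfact M) (selfact M) (homP M (selfact M)) LRx (eta M C x)"
  unfolding tamb_mor_def by (simp add: eta_LR_coend eta_plm eta_prm eta_pst)

section \<open>Triangle identities and dinaturality\<close>

lemma eps_eta: "h \<in> Hom M k k' \<Longrightarrow> eps C x k k' (eta M C x k k' h) = act_a C h (idm C x)"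
  unfolding eta_def using C.id_right[OF act_id_hom[OF _ x_ob]] by (simp add: eps_LR_ce_cls)

lemma eps_LR_hom: "\<zeta> \<in> coend C Lx Rx k k' \<Longrightarrow> eps C x k k' \<zeta> \<in> Hom C (act_o C k x) (act_o C k' x)"
  by (erule coend_LR_repE) (simp add: eps_eq_rep C.comp_hom)

lemma LRx_plm_coend_eps:
  assumes "\<zeta> \<in> coend C Lx Rx k k'" "f \<in> Hom M k'' k"
  shows "plm LRx k'' k k' f \<zeta> \<in> coend C Lx Rx k'' k'"
    and "eps C x k'' k' (plm LRx k'' k k' f \<zeta>) = cmp C (act_a C f (idm C x)) (eps C x k k' \<zeta>)"
proof -
  obtain d p q where r: "\<zeta> = ce_cls C Lx Rx k k' (d, p, q)" "rep \<zeta> = (d, p, q)" "d \<in> Ob C"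
    "p \<in> Hom C (act_o C k x) d" "q \<in> Hom C d (act_o C k' x)"
    using coend_LR_repE[OF assms(1)] by metis
  have f: "act_a C f (idm C x) \<in> Hom C (act_o C k'' x) (act_o C k x)"
    using act_id_hom[OF assms(2) x_ob] .
  show "plm LRx k'' k k' f \<zeta> \<in> coend C Lx Rx k'' k'"
    using r f assms(2) by (simp add: LRx_plm_ce_cls ce_cls_in_coend C.comp_hom)
  show "eps C x k'' k' (plm LRx k'' k k' f \<zeta>) = cmp C (act_a C f (idm C x)) (eps C x k k' \<zeta>)"
    using r f assms(2) by (simp add: LRx_plm_ce_cls eps_LR_ce_cls eps_eq_rep C.comp_assoc)
qed

lemma LRx_prm_coend_eps:
  assumes "\<zeta> \<in> coend C Lx Rx k k'" "g \<in> Hom M k' k''"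
  shows "prm LRx k k' k'' g \<zeta> \<in> coend C Lx Rx k k''"
    and "eps C x k k'' (prm LRx k k' k'' g \<zeta>) = cmp C (eps C x k k' \<zeta>) (act_a C g (idm C x))"
proof -
  obtain d p q where r: "\<zeta> = ce_cls C Lx Rx k k' (d, p, q)" "rep \<zeta> = (d, p, q)" "d \<in> Ob C"
    "p \<in> Hom C (act_o C k x) d" "q \<in> Hom C d (act_o C k' x)"
    using coend_LR_repE[OF assms(1)] by metis
  have g: "act_a C g (idm C x) \<in> Hom C (act_o C k' x) (act_o C k'' x)"
    using act_id_hom[OF assms(2) x_ob] .
  show "prm LRx k k' k'' g \<zeta> \<in> coend C Lx Rx k k''"
    using r g assms(2) by (simp add: LRx_prm_ce_cls ce_cls_in_coend C.comp_hom)
  show "eps C x k k'' (prm LRx k k' k'' g \<zeta>) = cmp C (eps C x k k' \<zeta>) (act_a C g (idm C x))"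
    using r g assms(2) by (simp add: LRx_prm_ce_cls eps_LR_ce_cls eps_eq_rep C.comp_assoc)
qed

lemma wR_eta_ce_cls: "p \<in> Hom C c (act_o C d x) \<Longrightarrow> h \<in> Hom M d n \<Longrightarrow>
    wR (selfact M) Rx LRx (eta M C x) c n (ce_cls (selfact M) Rx (homP M (selfact M)) c n (d, p, h))
  = ce_cls (selfact M) Rx LRx c n (d, p, eta M C x d n h)"
  by (rule wR_ce_cls) (simp add: eta_LR_coend eta_plm)

lemma wL_eta_ce_cls: "h \<in> Hom M n d \<Longrightarrow> q \<in> Hom C (act_o C d x) c \<Longrightarrow>
    wL (selfact M) LRx Lx (eta M C x) n c (ce_cls (selfact M) (homP M (selfact M)) Lx n c (d, h, q))
  = ce_cls (selfact M) LRx Lx n c (d, eta M C x n d h, q)"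
  by (rule wL_ce_cls) (simp add: eta_LR_coend eta_prm)

lemma lunit_wL_eps_ce_cls:
  assumes "\<xi> \<in> coend (selfact M) Rx Lx c e" "r \<in> Hom C e (act_o C n x)"
  shows "lunit Rx c n (wL C (homP M C) Rx (eps C x) c n (ce_cls C RLx Rx c n (e, \<xi>, r)))
    = cmp C (eps C x c e \<xi>) r"
proof -
  have "wL C (homP M C) Rx (eps C x) c n (ce_cls C RLx Rx c n (e, \<xi>, r))
      = ce_cls C (homP M C) Rx c n (e, eps C x c e \<xi>, r)"
    by (rule wL_ce_cls) (simp add: eps_hom eps_prm)
  also have "lunit Rx c n \<dots> = cmp C (eps C x c e \<xi>) r"
    by (rule trans[OF lunit_ce_cls]) (simp_all add: C.comp_assoc)
  finally show ?thesis .
qed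

lemma runit_wR_eps_ce_cls:
  assumes "p \<in> Hom C (act_o C n x) d" "\<xi> \<in> coend (selfact M) Rx Lx d c"
  shows "runit Lx n c (wR C Lx (homP M C) (eps C x) n c (ce_cls C Lx RLx n c (d, p, \<xi>)))
    = cmp C p (eps C x d c \<xi>)"
proof -
  have "wR C Lx (homP M C) (eps C x) n c (ce_cls C Lx RLx n c (d, p, \<xi>))
      = ce_cls C Lx (homP M C) n c (d, p, eps C x d c \<xi>)"
    by (rule wR_ce_cls) (simp add: eps_hom eps_plm)
  also have "runit Lx n c \<dots> = cmp C p (eps C x d c \<xi>)"
    by (rule trans[OF runit_ce_cls]) (simp_all add: C.comp_assoc)
  finally show ?thesis .
qed

text \<open>The associator picks representatives at both levels, so the composite in the first triangle
  identity is computed on an arbitrary representative (d, p, \<zeta>) of the outer class.\<close>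

lemma triangle_R_on_triple:
  assumes "d \<in> Ob M" "p \<in> Hom C c (act_o C d x)" "\<zeta> \<in> coend C Lx Rx d n"
  shows "lunit Rx c n (wL C (homP M C) Rx (eps C x) c n
      (case rep \<zeta> of (e, q, r) \<Rightarrow> ce_cls C RLx Rx c n (e, ce_cls (selfact M) Rx Lx c e (d, p, q), r)))
    = cmp C p (eps C x d n \<zeta>)"
proof -
  obtain e q r where r: "rep \<zeta> = (e, q, r)" "e \<in> Ob C" "q \<in> Hom C (act_o C d x) e" "r \<in> Hom C e (act_o C n x)"
    using coend_LR_repE[OF assms(3)] by metis
  have "ce_cls (selfact M) Rx Lx c e (d, p, q) \<in> coend (selfact M) Rx Lx c e"
    using assms(1,2) r by (intro ce_cls_in_coend) auto
  with r assms(2) show ?thesis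
    by (simp add: lunit_wL_eps_ce_cls eps_RL_ce_cls x_ob eps_eq_rep C.comp_assoc)
qed

lemma triangle_R:
  assumes "n \<in> Ob M" "h \<in> Hom C c (act_o C n x)"
  shows "lunit Rx c n (wL C (homP M C) Rx (eps C x) c n (assocB C (selfact M) C Rx Lx Rx c n
      (wR (selfact M) Rx LRx (eta M C x) c n (runitI M (selfact M) Rx c n h)))) = h"
proof -
  let ?F = "\<lambda>d p \<zeta>. lunit Rx c n (wL C (homP M C) Rx (eps C x) c n
      (case rep \<zeta> of (e, q, r) \<Rightarrow> ce_cls C RLx Rx c n (e, ce_cls (selfact M) Rx Lx c e (d, p, q), r)))"
  let ?\<eta> = "eta M C x n n (idm M n)"
  have "wR (selfact M) Rx LRx (eta M C x) c n (runitI M (selfact M) Rx c n h)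
      = ce_cls (selfact M) Rx LRx c n (n, h, ?\<eta>)"
    unfolding runitI_def using assms by (simp add: wR_eta_ce_cls M.id_hom)
  then have "lunit Rx c n (wL C (homP M C) Rx (eps C x) c n (assocB C (selfact M) C Rx Lx Rx c n
      (wR (selfact M) Rx LRx (eta M C x) c n (runitI M (selfact M) Rx c n h))))
    = (case rep (ce_cls (selfact M) Rx LRx c n (n, h, ?\<eta>)) of (d, p, \<zeta>) \<Rightarrow> ?F d p \<zeta>)"
    unfolding assocB_def by (simp split: prod.split)
  also have "\<dots> = ?F n h ?\<eta>"
  proof (rule case_rep_ce_cls)
    fix d d' g p \<zeta>
    assume a: "d \<in> Ob (selfact M)" "d' \<in> Ob (selfact M)" "g \<in> Hom (selfact M) d d'"
      "p \<in> pob Rx c d" "\<zeta> \<in> pob LRx d' n"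
    have g: "act_a C g (idm C x) \<in> Hom C (act_o C d x) (act_o C d' x)"
      using a act_id_hom x_ob by simp
    have "eps C x d' n \<zeta> \<in> Hom C (act_o C d' x) (act_o C n x)"
      using a eps_LR_hom by simp
    then show "?F d' (prm Rx c d d' g p) \<zeta> = ?F d p (plm LRx d d' n g \<zeta>)"
      using a g LRx_plm_coend_eps[of \<zeta> d' n g d] C.comp_assoc[of p c "act_o C d x"]
      by (simp add: triangle_R_on_triple C.comp_hom)
  qed
  also have "\<dots> = h"
    using assms M.id_hom[OF assms(1)] eta_LR_coend C.id_right
    by (simp add: triangle_R_on_triple eps_eta act.preserves_id x_ob)
  finally show ?thesis .
qed

lemma triangle_L_on_triple:
  assumes "e \<in> Ob M" "\<zeta> \<in> coend C Lx Rx n e" "r \<in> Hom C (act_o C e x) c"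
  shows "runit Lx n c (wR C Lx (homP M C) (eps C x) n c
      (case rep \<zeta> of (d, p, q) \<Rightarrow> ce_cls C Lx RLx n c (d, p, ce_cls (selfact M) Rx Lx d c (e, q, r))))
    = cmp C (eps C x n e \<zeta>) r"
proof -
  obtain d p q where r: "rep \<zeta> = (d, p, q)" "d \<in> Ob C" "p \<in> Hom C (act_o C n x) d" "q \<in> Hom C d (act_o C e x)"
    using coend_LR_repE[OF assms(2)] by metis
  have "ce_cls (selfact M) Rx Lx d c (e, q, r) \<in> coend (selfact M) Rx Lx d c"
    using assms(1,3) r by (intro ce_cls_in_coend) auto
  with r assms(3) show ?thesis
    by (simp add: runit_wR_eps_ce_cls eps_RL_ce_cls x_ob eps_eq_rep C.comp_assoc)
qed

lemma triangle_L:
  assumes "n \<in> Ob M" "h \<in> Hom C (act_o C n x) c"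
  shows "runit Lx n c (wR C Lx (homP M C) (eps C x) n c (assocF C (selfact M) C Lx Rx Lx n c
      (wL (selfact M) LRx Lx (eta M C x) n c (lunitI M (selfact M) Lx n c h)))) = h"
proof -
  let ?F = "\<lambda>e \<zeta> r. runit Lx n c (wR C Lx (homP M C) (eps C x) n c
      (case rep \<zeta> of (d, p, q) \<Rightarrow> ce_cls C Lx RLx n c (d, p, ce_cls (selfact M) Rx Lx d c (e, q, r))))"
  let ?\<eta> = "eta M C x n n (idm M n)"
  have "wL (selfact M) LRx Lx (eta M C x) n c (lunitI M (selfact M) Lx n c h)
      = ce_cls (selfact M) LRx Lx n c (n, ?\<eta>, h)"
    unfolding lunitI_def using assms by (simp add: wL_eta_ce_cls M.id_hom)
  then have "runit Lx n c (wR C Lx (homP M C) (eps C x) n c (assocF C (selfact M) C Lx Rx Lx n c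
      (wL (selfact M) LRx Lx (eta M C x) n c (lunitI M (selfact M) Lx n c h))))
    = (case rep (ce_cls (selfact M) LRx Lx n c (n, ?\<eta>, h)) of (e, \<zeta>, r) \<Rightarrow> ?F e \<zeta> r)"
    unfolding assocF_def by (simp split: prod.split)
  also have "\<dots> = ?F n ?\<eta> h"
  proof (rule case_rep_ce_cls)
    fix d d' g \<zeta> r
    assume a: "d \<in> Ob (selfact M)" "d' \<in> Ob (selfact M)" "g \<in> Hom (selfact M) d d'"
      "\<zeta> \<in> pob LRx n d" "r \<in> pob Lx d' c"
    have g: "act_a C g (idm C x) \<in> Hom C (act_o C d x) (act_o C d' x)"
      using a act_id_hom x_ob by simp
    have "eps C x n d \<zeta> \<in> Hom C (act_o C n x) (act_o C d x)"
      using a eps_LR_hom by simp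
    then show "?F d' (prm LRx n d d' g \<zeta>) r = ?F d \<zeta> (plm Lx d d' c g r)"
      using a g LRx_prm_coend_eps[of \<zeta> n d g d'] C.comp_assoc[of _ "act_o C n x" "act_o C d x"]
      by (simp add: triangle_L_on_triple C.comp_hom)
  qed
  also have "\<dots> = h"
    using assms M.id_hom[OF assms(1)] eta_LR_coend C.id_left
    by (simp add: triangle_L_on_triple eps_eta act.preserves_id x_ob)
  finally show ?thesis .
qed

lemma eps_dinatural:
  assumes "y \<in> Ob C" "f \<in> Hom C x y" "\<xi> \<in> coend (selfact M) Rx (Lp M C y) c c'"
  shows "eps C y c c' (wL (selfact M) (Rp M C y) (Lp M C y) (Rmor M C f) c c' \<xi>)
    = eps C x c c' (wR (selfact M) Rx Lx (Lmor M C f) c c' \<xi>)"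
proof -
  obtain n h k where r: "rep \<xi> = (n, h, k)" "n \<in> Ob M"
    "h \<in> Hom C c (act_o C n x)" "k \<in> Hom C (act_o C n y) c'"
    using coend_RL_repE[OF x_ob assms(1,3)] by metis
  moreover have "act_a C (idm M n) f \<in> Hom C (act_o C n x) (act_o C n y)"
    using id_act_hom[OF r(2) assms(2)] .
  ultimately show ?thesis
    using assms(1) by (simp add: wL_def wR_def Rmor_def Lmor_def eps_RL_ce_cls x_ob C.comp_assoc)
qed

lemma eta_dinatural:
  assumes "y \<in> Ob C" "f \<in> Hom C x y" "h \<in> Hom M k k'"
  shows "wR C Lx (Rp M C y) (Rmor M C f) k k' (eta M C x k k' h)
    = wL C Lx (Rp M C y) (Lmor M C f) k k' (eta M C y k k' h)"
proof -
  have k: "k \<in> Ob M" "k' \<in> Ob M" using assms(3) M.dom_ob M.cod_ob by blast+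
  have hx: "act_a C h (idm C x) \<in> Hom C (act_o C k x) (act_o C k' x)"
    and fk: "act_a C (idm M k) f \<in> Hom C (act_o C k x) (act_o C k y)"
    and fk': "act_a C (idm M k') f \<in> Hom C (act_o C k' x) (act_o C k' y)"
    using assms k x_ob by (simp_all add: act_id_hom id_act_hom)
  have hf: "cmp C (act_a C h (idm C x)) (act_a C (idm M k') f) = act_a C h f"
    and fh: "cmp C (act_a C (idm M k) f) (act_a C h (idm C y)) = act_a C h f"
    using act.preserves_comp[OF assms(3) M.id_hom[OF k(2)] C.id_hom[OF x_ob] assms(2)]
      act.preserves_comp[OF M.id_hom[OF k(1)] assms(3) assms(2) C.id_hom[OF assms(1)]]
      assms(2,3) by (simp_all add: M.id_left M.id_right C.id_left C.id_right)
  have "wR C Lx (Rp M C y) (Rmor M C f) k k' (eta M C x k k' h)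
      = ce_cls C Lx (Rp M C y) k k' (act_o C k' x, act_a C h (idm C x), act_a C (idm M k') f)"
    unfolding eta_def Rmor_def using fk' C.id_left[OF fk']
    by (subst wR_ce_cls) (auto intro: C.comp_hom simp: C.comp_assoc)
  also have "\<dots> = ce_cls C Lx (Rp M C y) k k' (act_o C k' y, act_a C h f, idm C (act_o C k' y))"
    using k assms(1) hx fk' by (simp add: ce_cls_LR_collapse hf)
  also have "\<dots> = wL C Lx (Rp M C y) (Lmor M C f) k k' (eta M C y k k' h)"
    unfolding eta_def Lmor_def using fk
    by (subst wL_ce_cls) (auto intro: C.comp_hom simp: C.comp_assoc fh)
  finally show ?thesis .
qed

end

theorem mainTheorem2:
  fixes M :: "('m,'ma) moncat" and C :: "('m,'ma,'c,'ca) actg" and x :: 'c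
  assumes "actegory M C" and "x \<in> Ob C"
  shows
   "tamb_mor M C C (pcomp C (selfact M) C (Rp M C x) (Lp M C x)) (homP M C) (eps C x) \<and>
    tamb_mor M (selfact M) (selfact M) (homP M (selfact M))
      (pcomp (selfact M) C (selfact M) (Lp M C x) (Rp M C x)) (eta M C x) \<and>
    (\<forall>c\<in>Ob C. \<forall>n\<in>Ob M. \<forall>h\<in>Hom C c (act_o C n x).
       lunit (Rp M C x) c n
        (wL C (homP M C) (Rp M C x) (eps C x) c n
          (assocB C (selfact M) C (Rp M C x) (Lp M C x) (Rp M C x) c n
            (wR (selfact M) (Rp M C x) (pcomp (selfact M) C (selfact M) (Lp M C x) (Rp M C x))
                (eta M C x) c n
              (runitI M (selfact M) (Rp M C x) c n h)))) = h) \<and>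
    (\<forall>n\<in>Ob M. \<forall>c\<in>Ob C. \<forall>h\<in>Hom C (act_o C n x) c.
       runit (Lp M C x) n c
        (wR C (Lp M C x) (homP M C) (eps C x) n c
          (assocF C (selfact M) C (Lp M C x) (Rp M C x) (Lp M C x) n c
            (wL (selfact M) (pcomp (selfact M) C (selfact M) (Lp M C x) (Rp M C x)) (Lp M C x)
                (eta M C x) n c
              (lunitI M (selfact M) (Lp M C x) n c h)))) = h) \<and>
    (\<forall>y f. y \<in> Ob C \<and> f \<in> Hom C x y \<longrightarrow>
       (\<forall>c\<in>Ob C. \<forall>c'\<in>Ob C. \<forall>\<xi>\<in>coend (selfact M) (Rp M C x) (Lp M C y) c c'.
          eps C y c c' (wL (selfact M) (Rp M C y) (Lp M C y) (Rmor M C f) c c' \<xi>) =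
          eps C x c c' (wR (selfact M) (Rp M C x) (Lp M C x) (Lmor M C f) c c' \<xi>)) \<and>
       (\<forall>k\<in>Ob M. \<forall>k'\<in>Ob M. \<forall>h\<in>Hom M k k'.
          wR C (Lp M C x) (Rp M C y) (Rmor M C f) k k' (eta M C x k k' h) =
          wL C (Lp M C x) (Rp M C y) (Lmor M C f) k k' (eta M C y k k' h)))"
proof -
  interpret actegory_obj M C x
    using assms by unfold_locales
  show ?thesis
    using eps_tamb_mor eta_tamb_mor triangle_R triangle_L eps_dinatural eta_dinatural by blast
qed

end
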